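(* Let $x_i,x_j:[0,\infty)\to\mathbb{S}^2$ and $v_i,v_j:[0,\infty)\to\mathbb{R}^3$, with $v_i$ and $v_j$ uniformly bounded in time. For $k>0$ let $$f_k(t):=\|x_i(t)+x_j(t)\|\,\big\|R(x_j(t),x_i(t))v_j(t)-v_i(t)\big\|^k,$$ with $f_k(t):=0$ whenever $x_i(t)=-x_j(t)$. Then the conditions $\lim_{t\to\infty}f_k(t)=0$ are equivalent for all $k>0$ (i.e. if it holds for one $k>0$, it holds for every $k>0$).
   Context: $\mathbb{S}^2$ is the unit sphere in $\mathbb{R}^3$ and $\|\cdot\|$ the Euclidean norm. For column vectors $x_1,x_2\in\mathbb{S}^2$ with $x_1\ne-x_2$, $R(x_1,x_2)=I$ if $x_1=x_2$, and otherwise $$R(x_1,x_2)=\langle x_1,x_2\rangle I-x_1x_2^T+x_2x_1^T+(1-\langle x_1,x_2\rangle)\Big(\frac{x_1\times x_2}{\|x_1\times x_2\|}\Big)\Big(\frac{x_1\times x_2}{\|x_1\times x_2\|}\Big)^T.$$ *)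

theory Defs
  imports "HOL-Analysis.Analysis"
begin

definition outer3 :: "real^3 \<Rightarrow> real^3 \<Rightarrow> real^3^3" where
  "outer3 a b = (\<chi> i j. a $ i * b $ j)"

text \<open>The rotation R(x1,x2) of the paper (only meaningful for x1 \<noteq> -x2).\<close>
definition Rot :: "real^3 \<Rightarrow> real^3 \<Rightarrow> real^3^3" where
  "Rot x1 x2 = (if x1 = x2 then mat 1 else
     (x1 \<bullet> x2) *\<^sub>R mat 1 - outer3 x1 x2 + outer3 x2 x1
     + (1 - x1 \<bullet> x2) *\<^sub>R outer3 (cross3 x1 x2 /\<^sub>R norm (cross3 x1 x2))
                                    (cross3 x1 x2 /\<^sub>R norm (cross3 x1 x2)))"

definition fk :: "real \<Rightarrow> (real \<Rightarrow> real^3) \<Rightarrow> (real \<Rightarrow> real^3) \<Rightarrow> (real \<Rightarrow> real^3)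
                  \<Rightarrow> (real \<Rightarrow> real^3) \<Rightarrow> real \<Rightarrow> real" where
  "fk k xi xj vi vj t = (if xi t = - xj t then 0 else
     norm (xi t + xj t) * norm (Rot (xj t) (xi t) *v vj t - vi t) powr k)"

end

theory Submission
  imports Defs
begin

text \<open>Write f_k = a b^k with a = |x_i + x_j| and b = |R(x_j,x_i) v_j - v_i|; the convention
  f_k = 0 at antipodal points agrees with this because a vanishes there. Both factors are
  eventually bounded: a by 2, and b because R(x_1,x_2) has operator norm at most 5 on unit vectors.
  Raising the exponent is harmless since b^l \<le> M^(l-k) b^k for k \<le> l; lowering it uses
  a b^l = a^(1-l/k) (a b^k)^(l/k) \<le> A^(1-l/k) (a b^k)^(l/k).\<close>

lemma outer3_mult_vec: "outer3 a b *v v = (b \<bullet> v) *\<^sub>R a"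
  by (simp add: vec_eq_iff matrix_vector_mult_def outer3_def inner_vec_def
      sum_distrib_left mult.commute mult.left_commute)

lemma norm_inner_scaleR_le:
  fixes c v :: "'a::real_inner"
  assumes "norm c \<le> 1"
  shows "norm ((c \<bullet> v) *\<^sub>R c) \<le> norm v"
proof -
  have "norm ((c \<bullet> v) *\<^sub>R c) \<le> norm c * (norm c * norm v)"
    using Cauchy_Schwarz_ineq2[of c v] by (simp add: mult_left_mono mult.commute)
  also have "\<dots> \<le> norm v"
    using assms by (meson mult_left_le_one_le mult_nonneg_nonneg norm_ge_zero order_trans)
  finally show ?thesis .
qed

lemma norm_Rot_mult_vec_le:
  assumes "norm x1 = 1" "norm x2 = 1"
  shows "norm (Rot x1 x2 *v v) \<le> 5 * norm v"
proof (cases "x1 = x2")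
  case True
  then show ?thesis by (simp add: Rot_def)
next
  case False
  define c where "c = cross3 x1 x2 /\<^sub>R norm (cross3 x1 x2)"
  have "norm c \<le> 1"
    unfolding c_def by (cases "cross3 x1 x2 = 0") auto
  then have c_term: "norm ((c \<bullet> v) *\<^sub>R c) \<le> norm v"
    by (rule norm_inner_scaleR_le)
  have x1x2: "\<bar>x1 \<bullet> x2\<bar> \<le> 1"
    using Cauchy_Schwarz_ineq2[of x1 x2] assms by simp
  have "Rot x1 x2 *v v = (x1 \<bullet> x2) *\<^sub>R v - (x2 \<bullet> v) *\<^sub>R x1 + (x1 \<bullet> v) *\<^sub>R x2
      + (1 - x1 \<bullet> x2) *\<^sub>R ((c \<bullet> v) *\<^sub>R c)"
    using False unfolding Rot_def c_def[symmetric]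
    by (simp add: matrix_vector_mult_add_rdistrib matrix_vector_mult_diff_rdistrib
        scaleR_matrix_vector_assoc[symmetric] outer3_mult_vec)
  also have "norm \<dots> \<le> norm v + norm v + norm v + 2 * norm v"
  proof (intro norm_triangle_le norm_triangle_le_diff add_mono)
    show "norm ((x1 \<bullet> x2) *\<^sub>R v) \<le> norm v"
      using x1x2 by (simp add: mult_left_le_one_le)
    show "norm ((x2 \<bullet> v) *\<^sub>R x1) \<le> norm v"
      using Cauchy_Schwarz_ineq2[of x2 v] assms by simp
    show "norm ((x1 \<bullet> v) *\<^sub>R x2) \<le> norm v"
      using Cauchy_Schwarz_ineq2[of x1 v] assms by simp
    show "norm ((1 - x1 \<bullet> x2) *\<^sub>R ((c \<bullet> v) *\<^sub>R c)) \<le> 2 * norm v"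
      unfolding norm_scaleR[of "1 - x1 \<bullet> x2"] using x1x2 c_term by (intro mult_mono) auto
  qed
  finally show ?thesis by simp
qed

lemma tendsto_zero_mult_powr_raise:
  fixes a b :: "'a \<Rightarrow> real"
  assumes a_nonneg: "\<And>t. 0 \<le> a t" and b_nonneg: "\<And>t. 0 \<le> b t"
    and b_bounded: "eventually (\<lambda>t. b t \<le> M) F" and "k \<le> l"
    and lim: "((\<lambda>t. a t * b t powr k) \<longlongrightarrow> 0) F"
  shows "((\<lambda>t. a t * b t powr l) \<longlongrightarrow> 0) F"
proof (rule Lim_null_comparison)
  show "eventually (\<lambda>t. norm (a t * b t powr l) \<le> a t * b t powr k * M powr (l - k)) F"
    using b_bounded
  proof eventually_elim
    case (elim t)
    have "b t powr l = b t powr k * b t powr (l - k)"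
      using b_nonneg[of t] by (cases "b t = 0") (auto simp: powr_add[symmetric])
    moreover have "b t powr (l - k) \<le> M powr (l - k)"
      using elim b_nonneg[of t] \<open>k \<le> l\<close> by (intro powr_mono2) auto
    ultimately show ?case
      using a_nonneg[of t] b_nonneg[of t] by (simp add: mult_left_mono mult.assoc)
  qed
  show "((\<lambda>t. a t * b t powr k * M powr (l - k)) \<longlongrightarrow> 0) F"
    using tendsto_mult_left_zero[OF lim] .
qed

lemma tendsto_zero_mult_powr_lower:
  fixes a b :: "'a \<Rightarrow> real"
  assumes a_nonneg: "\<And>t. 0 \<le> a t" and b_nonneg: "\<And>t. 0 \<le> b t"
    and a_bounded: "eventually (\<lambda>t. a t \<le> A) F" and "0 < l" "l \<le> k"
    and lim: "((\<lambda>t. a t * b t powr k) \<longlongrightarrow> 0) F"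
  shows "((\<lambda>t. a t * b t powr l) \<longlongrightarrow> 0) F"
proof (rule Lim_null_comparison)
  have "0 < k" using \<open>0 < l\<close> \<open>l \<le> k\<close> by linarith
  show "eventually (\<lambda>t. norm (a t * b t powr l)
      \<le> A powr (1 - l/k) * (a t * b t powr k) powr (l/k)) F"
    using a_bounded
  proof eventually_elim
    case (elim t)
    show ?case
    proof (cases "a t = 0")
      case False
      then have "0 < a t" using a_nonneg[of t] by linarith
      then have "a t * b t powr l = a t powr (1 - l/k) * (a t * b t powr k) powr (l/k)"
        using b_nonneg[of t] \<open>0 < k\<close>
        by (simp add: powr_mult powr_powr mult.assoc flip: powr_add)
      moreover have "a t powr (1 - l/k) \<le> A powr (1 - l/k)"
        using elim \<open>0 < a t\<close> \<open>0 < k\<close> \<open>l \<le> k\<close> by (intro powr_mono2) auto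
      ultimately show ?thesis
        using a_nonneg[of t] b_nonneg[of t] by (simp add: mult_right_mono)
    qed simp
  qed
  have "((\<lambda>t. (a t * b t powr k) powr (l/k)) \<longlongrightarrow> 0) F"
    using a_nonneg b_nonneg \<open>0 < l\<close> \<open>0 < k\<close> by (intro tendsto_zero_powrI[OF lim, where b="l/k"]) auto
  then show "((\<lambda>t. A powr (1 - l/k) * (a t * b t powr k) powr (l/k)) \<longlongrightarrow> 0) F"
    by (rule tendsto_mult_right_zero)
qed

lemma tendsto_zero_mult_powr_iff:
  fixes a b :: "'a \<Rightarrow> real"
  assumes "\<And>t. 0 \<le> a t" "\<And>t. 0 \<le> b t"
    and "eventually (\<lambda>t. a t \<le> A) F" "eventually (\<lambda>t. b t \<le> M) F" and "0 < k" "0 < l"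
  shows "((\<lambda>t. a t * b t powr k) \<longlongrightarrow> 0) F \<longleftrightarrow> ((\<lambda>t. a t * b t powr l) \<longlongrightarrow> 0) F"
proof (cases "k \<le> l")
  case True
  then show ?thesis
    using assms tendsto_zero_mult_powr_raise[of a b M F k l] tendsto_zero_mult_powr_lower[of a b A F k l]
    by blast
next
  case False
  then show ?thesis
    using assms tendsto_zero_mult_powr_raise[of a b M F l k] tendsto_zero_mult_powr_lower[of a b A F l k]
    by auto
qed

theorem lemmaC1:
  fixes xi xj vi vj :: "real \<Rightarrow> real^3"
  assumes "\<forall>t\<ge>0. norm (xi t) = 1" and "\<forall>t\<ge>0. norm (xj t) = 1"
    and "\<exists>B. \<forall>t\<ge>0. norm (vi t) \<le> B" and "\<exists>B. \<forall>t\<ge>0. norm (vj t) \<le> B"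
  shows "\<forall>k>0. \<forall>l>0. ((fk k xi xj vi vj \<longlongrightarrow> 0) at_top) \<longleftrightarrow> ((fk l xi xj vi vj \<longlongrightarrow> 0) at_top)"
proof -
  obtain Bi where Bi: "\<forall>t\<ge>0. norm (vi t) \<le> Bi" using assms(3) by blast
  obtain Bj where Bj: "\<forall>t\<ge>0. norm (vj t) \<le> Bj" using assms(4) by blast
  define a where "a t = norm (xi t + xj t)" for t
  define b where "b t = norm (Rot (xj t) (xi t) *v vj t - vi t)" for t
  have fk_eq: "fk k xi xj vi vj = (\<lambda>t. a t * b t powr k)" for k
    by (auto simp: fun_eq_iff fk_def a_def b_def)
  have "eventually (\<lambda>t. a t \<le> 2) at_top"
    using eventually_ge_at_top[of "0::real"]
    by eventually_elim (use assms(1,2) in \<open>auto simp: a_def intro: norm_triangle_le\<close>)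
  moreover have "eventually (\<lambda>t. b t \<le> 5 * Bj + Bi) at_top"
    using eventually_ge_at_top[of "0::real"]
  proof eventually_elim
    case (elim t)
    have "norm (Rot (xj t) (xi t) *v vj t) \<le> 5 * Bj"
      using norm_Rot_mult_vec_le[of "xj t" "xi t" "vj t"] assms(1,2) Bj elim by force
    then show ?case
      using Bi elim norm_triangle_ineq4[of "Rot (xj t) (xi t) *v vj t" "vi t"] by (force simp: b_def)
  qed
  moreover have "0 \<le> a t" "0 \<le> b t" for t
    by (simp_all add: a_def b_def)
  ultimately show ?thesis
    unfolding fk_eq using tendsto_zero_mult_powr_iff by blast
qed

end
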